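(* Let $\theta\ge1$, let $G=(\mu,\mathcal{V},\mathcal{W},\mathcal{E})$ be a $\theta$-maximal weighted bipartite graph with edge density $\delta>0$, and let $\eta\in(0,1]$. Then, for all sets $\mathcal{A}\subseteq\mathcal{V}$ and $\mathcal{B}\subseteq\mathcal{W}$ such that $\mu(\mathcal{A})\leqslant \eta\cdot \mu(\mathcal{V})$ and $\mu(\mathcal{B})\leqslant\eta \cdot \mu(\mathcal{W})$, we have $\mu(\mathcal{E}(\mathcal{A},\mathcal{B}))\leqslant \eta^{2-2/\theta} \cdot \mu(\mathcal{E})$.
   Context: A weighted bipartite graph is $G=(\mu,\mathcal{V},\mathcal{W},\mathcal{E})$ with $\mu:\mathbb{R}_{>0}\to\mathbb{R}_{>0}$, $\mathcal{V},\mathcal{W}$ finite sets of positive reals, $\mathcal{E}\subseteq\mathcal{V}\times\mathcal{W}$. $\mu(\mathcal{T})=\sum_{t\in\mathcal{T}}\mu(t)$ and $\mu(\mathcal{E})=\sum_{(v,w)\in\mathcal{E}}\mu(v)\mu(w)$. Edge density $\delta(G)=\mu(\mathcal{E})/(\mu(\mathcal{V})\mu(\mathcal{W}))$ if $\mathcal{E}\ne\emptyset$, else $0$. For $\theta\ge1$, $\mu^{(\theta)}(G)=\delta(G)^\theta\mu(\mathcal{V})\mu(\mathcal{W})$. A subgraph of $G$ is $(\mu,\mathcal{V}',\mathcal{W}',\mathcal{E}')$ with $\mathcal{V}'\subseteq\mathcal{V}$, $\mathcal{W}'\subseteq\mathcal{W}$, $\mathcal{E}'\subseteq\mathcal{E}\cap(\mathcal{V}'\times\mathcal{W}')$.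 $G$ is $\theta$-maximal if $\mu^{(\theta)}(G)\ge\mu^{(\theta)}(G')$ for every subgraph $G'$. $\mathcal{E}(\mathcal{A},\mathcal{B})=\mathcal{E}\cap(\mathcal{A}\times\mathcal{B})$. *)

theory Defs
  imports "HOL-Analysis.Analysis"
begin

record wbg =
  wmu :: "real \<Rightarrow> real"
  vV  :: "real set"
  vW  :: "real set"
  eE  :: "(real \<times> real) set"

definition wbg_valid :: "wbg \<Rightarrow> bool" where
  "wbg_valid G \<longleftrightarrow> (\<forall>t>0. wmu G t > 0) \<and>
     finite (vV G) \<and> finite (vW G) \<and>
     (\<forall>v\<in>vV G. v > 0) \<and> (\<forall>w\<in>vW G. w > 0) \<and>
     eE G \<subseteq> vV G \<times> vW G"

definition mu_set :: "(real \<Rightarrow> real) \<Rightarrow> real set \<Rightarrow> real" where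
  "mu_set \<mu> T = (\<Sum>t\<in>T. \<mu> t)"

definition mu_edges :: "(real \<Rightarrow> real) \<Rightarrow> (real \<times> real) set \<Rightarrow> real" where
  "mu_edges \<mu> E = (\<Sum>(v,w)\<in>E. \<mu> v * \<mu> w)"

definition density :: "wbg \<Rightarrow> real" where
  "density G = (if eE G = {} then 0
     else mu_edges (wmu G) (eE G) / (mu_set (wmu G) (vV G) * mu_set (wmu G) (vW G)))"

definition mu_theta :: "real \<Rightarrow> wbg \<Rightarrow> real" where
  "mu_theta \<theta> G = density G powr \<theta> * mu_set (wmu G) (vV G) * mu_set (wmu G) (vW G)"

definition is_subgraph :: "wbg \<Rightarrow> wbg \<Rightarrow> bool" where
  "is_subgraph G' G \<longleftrightarrow> wmu G' = wmu G \<and> vV G' \<subseteq> vV G \<and> vW G' \<subseteq> vW G \<and>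
     eE G' \<subseteq> eE G \<inter> (vV G' \<times> vW G')"

definition theta_maximal :: "real \<Rightarrow> wbg \<Rightarrow> bool" where
  "theta_maximal \<theta> G \<longleftrightarrow> (\<forall>G'. is_subgraph G' G \<longrightarrow> mu_theta \<theta> G \<ge> mu_theta \<theta> G')"

definition edges_between :: "wbg \<Rightarrow> real set \<Rightarrow> real set \<Rightarrow> (real \<times> real) set" where
  "edges_between G A B = eE G \<inter> (A \<times> B)"

end

theory Submission
  imports Defs
begin

text \<open>Comparing \<open>G\<close> with its subgraph induced by \<open>A\<close> and \<open>B\<close>, \<open>\<theta>\<close>-maximality gives
  \<open>(x/p)\<^sup>\<theta> p \<le> (e/q)\<^sup>\<theta> q\<close> for \<open>x = \<mu>(E(A,B))\<close>, \<open>p = \<mu>(A)\<mu>(B)\<close>, \<open>e = \<mu>(E)\<close> and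
  \<open>q = \<mu>(V)\<mu>(W)\<close>. Taking \<open>\<theta>\<close>-th roots yields \<open>x \<le> (p/q) powr (1 - 1/\<theta>) * e\<close>, and the
  hypotheses give \<open>p/q \<le> \<eta>\<^sup>2\<close>.\<close>

lemma le_powr_ratio_mult_if_density_powr_le:
  fixes x e p q \<theta> :: real
  assumes "x \<ge> 0" "e \<ge> 0" "p > 0" "q > 0" "\<theta> > 0"
    and le: "(x / p) powr \<theta> * p \<le> (e / q) powr \<theta> * q"
  shows "x \<le> (p / q) powr (1 - 1 / \<theta>) * e"
proof -
  have "(x / p) powr \<theta> \<le> (e / q) powr \<theta> * (q / p)"
    using le \<open>p > 0\<close> by (simp add: field_simps)
  then have "((x / p) powr \<theta>) powr (1 / \<theta>) \<le> ((e / q) powr \<theta> * (q / p)) powr (1 / \<theta>)"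
    using assms by (intro powr_mono2) auto
  also have "((e / q) powr \<theta> * (q / p)) powr (1 / \<theta>) = e / q * (q / p) powr (1 / \<theta>)"
    using assms by (subst powr_mult) (auto simp: powr_powr)
  finally have "x / p \<le> e / q * (q / p) powr (1 / \<theta>)"
    using assms by (simp add: powr_powr)
  then have "x \<le> e * ((p / q) * (q / p) powr (1 / \<theta>))"
    using assms by (simp add: field_simps)
  also have "(p / q) * (q / p) powr (1 / \<theta>) = (p / q) powr (1 - 1 / \<theta>)"
    using assms by (simp add: powr_diff powr_divide)
  finally show ?thesis
    by (simp add: mult.commute)
qed

lemma wbg_valid_mu_set_nonneg:
  assumes "wbg_valid G" "S \<subseteq> vV G \<union> vW G"
  shows "mu_set (wmu G) S \<ge> 0"
  using assms unfolding wbg_valid_def mu_set_def by (intro sum_nonneg less_imp_le) blast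

lemma wbg_valid_mu_set_pos:
  assumes "wbg_valid G" "S \<subseteq> vV G \<union> vW G" "S \<noteq> {}"
  shows "mu_set (wmu G) S > 0"
proof -
  have "finite S"
    using assms unfolding wbg_valid_def by (meson finite_UnI finite_subset)
  then show ?thesis
    using assms unfolding wbg_valid_def mu_set_def by (intro sum_pos) auto
qed

lemma wbg_valid_mu_edges_nonneg:
  assumes "wbg_valid G" "F \<subseteq> eE G"
  shows "mu_edges (wmu G) F \<ge> 0"
  using assms unfolding wbg_valid_def mu_edges_def
  by (intro sum_nonneg) (auto intro!: mult_nonneg_nonneg less_imp_le)

lemma is_subgraph_induced:
  "A \<subseteq> vV G \<Longrightarrow> B \<subseteq> vW G \<Longrightarrow>
    is_subgraph (G\<lparr>vV := A, vW := B, eE := edges_between G A B\<rparr>) G"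
  by (auto simp: is_subgraph_def edges_between_def)

lemma mu_theta_nonempty:
  "eE G \<noteq> {} \<Longrightarrow> mu_theta \<theta> G =
    (mu_edges (wmu G) (eE G) / (mu_set (wmu G) (vV G) * mu_set (wmu G) (vW G))) powr \<theta>
      * (mu_set (wmu G) (vV G) * mu_set (wmu G) (vW G))"
  by (simp add: mu_theta_def density_def)

lemma theta_maximal_edges_between_le:
  fixes G :: wbg and \<theta> :: real and A B :: "real set"
  defines "\<mu> \<equiv> wmu G"
  assumes G: "wbg_valid G" and "\<theta> \<ge> 1" and max: "theta_maximal \<theta> G"
    and "A \<subseteq> vV G" and "B \<subseteq> vW G"
  shows "mu_edges \<mu> (edges_between G A B)
    \<le> ((mu_set \<mu> A * mu_set \<mu> B) / (mu_set \<mu> (vV G) * mu_set \<mu> (vW G))) powr (1 - 1 / \<theta>)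
      * mu_edges \<mu> (eE G)"
proof (cases "edges_between G A B = {}")
  case True
  then show ?thesis
    using wbg_valid_mu_edges_nonneg[OF G] by (simp add: \<mu>_def mu_edges_def)
next
  case False
  have sub: "edges_between G A B \<subseteq> eE G" "edges_between G A B \<subseteq> A \<times> B"
    by (auto simp: edges_between_def)
  with False have "eE G \<noteq> {}" "A \<noteq> {}" "B \<noteq> {}" "vV G \<noteq> {}" "vW G \<noteq> {}"
    using \<open>A \<subseteq> vV G\<close> \<open>B \<subseteq> vW G\<close> by auto
  then have "mu_set \<mu> A > 0" "mu_set \<mu> B > 0" "mu_set \<mu> (vV G) > 0" "mu_set \<mu> (vW G) > 0"
    using wbg_valid_mu_set_pos[OF G] \<open>A \<subseteq> vV G\<close> \<open>B \<subseteq> vW G\<close>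
    unfolding \<mu>_def by blast+
  then have pos: "mu_set \<mu> A * mu_set \<mu> B > 0" "mu_set \<mu> (vV G) * mu_set \<mu> (vW G) > 0"
    by simp_all
  have "mu_theta \<theta> (G\<lparr>vV := A, vW := B, eE := edges_between G A B\<rparr>) \<le> mu_theta \<theta> G"
    using max is_subgraph_induced[OF \<open>A \<subseteq> vV G\<close> \<open>B \<subseteq> vW G\<close>]
    by (simp add: theta_maximal_def)
  then have "(mu_edges \<mu> (edges_between G A B) / (mu_set \<mu> A * mu_set \<mu> B)) powr \<theta>
      * (mu_set \<mu> A * mu_set \<mu> B)
    \<le> (mu_edges \<mu> (eE G) / (mu_set \<mu> (vV G) * mu_set \<mu> (vW G))) powr \<theta>
      * (mu_set \<mu> (vV G) * mu_set \<mu> (vW G))"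
    using False \<open>eE G \<noteq> {}\<close> by (simp add: mu_theta_nonempty \<mu>_def)
  then show ?thesis
    using pos \<open>\<theta> \<ge> 1\<close> wbg_valid_mu_edges_nonneg[OF G] sub(1)
    by (intro le_powr_ratio_mult_if_density_powr_le) (auto simp: \<mu>_def)
qed

theorem lemma5p12:
  fixes G :: wbg and \<theta> \<eta> :: real and A B :: "real set"
  assumes "wbg_valid G"
    and "\<theta> \<ge> 1"
    and "theta_maximal \<theta> G"
    and "density G > 0"
    and "0 < \<eta>" and "\<eta> \<le> 1"
    and "A \<subseteq> vV G" and "B \<subseteq> vW G"
    and "mu_set (wmu G) A \<le> \<eta> * mu_set (wmu G) (vV G)"
    and "mu_set (wmu G) B \<le> \<eta> * mu_set (wmu G) (vW G)"
  shows "mu_edges (wmu G) (edges_between G A B) \<le> \<eta> powr (2 - 2 / \<theta>) * mu_edges (wmu G) (eE G)"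
proof -
  define \<mu> where "\<mu> = wmu G"
  define p where "p = mu_set \<mu> A * mu_set \<mu> B"
  define q where "q = mu_set \<mu> (vV G) * mu_set \<mu> (vW G)"
  have "eE G \<noteq> {}"
    using \<open>density G > 0\<close> by (auto simp: density_def)
  then have "vV G \<noteq> {}" "vW G \<noteq> {}"
    using \<open>wbg_valid G\<close> by (auto simp: wbg_valid_def)
  then have "q > 0"
    using wbg_valid_mu_set_pos[OF \<open>wbg_valid G\<close>] by (simp add: q_def \<mu>_def)
  have nonneg: "0 \<le> mu_set \<mu> A" "0 \<le> mu_set \<mu> B" "0 \<le> mu_set \<mu> (vV G)"
    using wbg_valid_mu_set_nonneg[OF \<open>wbg_valid G\<close>] assms(7,8) unfolding \<mu>_def
    by (meson le_supI1 le_supI2 order_refl)+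
  then have "0 \<le> p"
    by (simp add: p_def)
  have "p \<le> (\<eta> * mu_set \<mu> (vV G)) * (\<eta> * mu_set \<mu> (vW G))"
    using assms(9,10) nonneg \<open>\<eta> > 0\<close> unfolding p_def \<mu>_def by (intro mult_mono) auto
  then have "p / q \<le> \<eta> ^ 2"
    using \<open>q > 0\<close> by (simp add: q_def field_simps power2_eq_square)
  then have "(p / q) powr (1 - 1 / \<theta>) \<le> (\<eta> powr 2) powr (1 - 1 / \<theta>)"
    using \<open>0 \<le> p\<close> \<open>q > 0\<close> \<open>\<theta> \<ge> 1\<close> \<open>\<eta> > 0\<close> by (intro powr_mono2) (auto simp: powr_numeral)
  also have "\<dots> = \<eta> powr (2 - 2 / \<theta>)"
    by (simp add: powr_powr right_diff_distrib)
  finally have "(p / q) powr (1 - 1 / \<theta>) * mu_edges \<mu> (eE G) \<le> \<eta> powr (2 - 2 / \<theta>) * mu_edges \<mu> (eE G)"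
    using wbg_valid_mu_edges_nonneg[OF \<open>wbg_valid G\<close>] by (intro mult_right_mono) (auto simp: \<mu>_def)
  with theta_maximal_edges_between_le[OF assms(1-3,7,8)] show ?thesis
    unfolding p_def q_def \<mu>_def by (rule order_trans)
qed

end
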